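(* Let $f:\mathbb{R}^n\to(-\infty,+\infty]$ be proper, lower semicontinuous and prox-bounded with threshold $\lambda_f>0$, let $0<\lambda<\lambda_f$ and let $x_0\in\operatorname{dom}\partial_p^\lambda f$. Define $\widehat f:\mathbb{R}^n\to(-\infty,+\infty]$ by $$\widehat f(x):=f(x_0)+\lambda^{-1}j(x_0)+\sup\Big\{\sum_{i=0}^{k-1}\langle x_i^*+\lambda^{-1}x_i,x_{i+1}-x_i\rangle+\langle x_k^*+\lambda^{-1}x_k,x-x_k\rangle\Big\}-\lambda^{-1}j(x),$$ where the supremum is over all $k\in\mathbb N$, all $x_1,\dots,x_k\in\operatorname{dom}\partial_p^\lambda f$ and all $x_i^*\in\partial_p^\lambda f(x_i)$, $i=0,\dots,k$. Then: (i) $\widehat f=h_\lambda f$ and $e_\lambda\widehat f=e_\lambda f$; (ii) if in addition $f+\lambda^{-1}j$ is convex, then $\widehat f=f$.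
   Context: $j:=\frac12\|\cdot\|^2$. $e_\lambda f(x):=\inf_y\{f(y)+\frac1{2\lambda}\|y-x\|^2\}$; prox-bounded with threshold $\lambda_f=\sup\{\lambda>0:e_\lambda f(x)>-\infty\text{ for some }x\}$. $v\in\partial_p^\lambda f(x)$ iff $x\in\operatorname{dom}f$ and $f(y)\ge f(x)+\langle v,y-x\rangle-\frac1{2\lambda}\|y-x\|^2$ for all $y$. $h_\lambda f:=-e_\lambda(-e_\lambda f)$ is the $\lambda$-proximal hull. *)

theory Defs
  imports "HOL-Analysis.Analysis"
begin

definition jq :: "'a::euclidean_space \<Rightarrow> real" where
  "jq x = (norm x)\<^sup>2 / 2"

definition proper_fun :: "('a::euclidean_space \<Rightarrow> ereal) \<Rightarrow> bool" where
  "proper_fun f \<longleftrightarrow> (\<forall>x. f x \<noteq> -\<infinity>) \<and> (\<exists>x. f x \<noteq> \<infinity>)"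

definition lsc_fun :: "('a::euclidean_space \<Rightarrow> ereal) \<Rightarrow> bool" where
  "lsc_fun f \<longleftrightarrow> (\<forall>x. f x \<le> Liminf (at x) f)"

definition moreau_env :: "real \<Rightarrow> ('a::euclidean_space \<Rightarrow> ereal) \<Rightarrow> 'a \<Rightarrow> ereal" where
  "moreau_env lam f x = (INF y. f y + ereal ((norm (y - x))\<^sup>2 / (2 * lam)))"

definition prox_bounded :: "('a::euclidean_space \<Rightarrow> ereal) \<Rightarrow> bool" where
  "prox_bounded f \<longleftrightarrow> (\<exists>lam>0. \<exists>x. moreau_env lam f x > -\<infinity>)"

definition prox_threshold :: "('a::euclidean_space \<Rightarrow> ereal) \<Rightarrow> ereal" where
  "prox_threshold f = (SUP lam \<in> {lam::real. lam > 0 \<and> (\<exists>x. moreau_env lam f x > -\<infinity>)}. ereal lam)"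

definition prox_subdiff :: "real \<Rightarrow> ('a::euclidean_space \<Rightarrow> ereal) \<Rightarrow> 'a \<Rightarrow> 'a set" where
  "prox_subdiff lam f x = {v. f x < \<infinity> \<and>
     (\<forall>y. f y \<ge> f x + ereal (inner v (y - x) - (norm (y - x))\<^sup>2 / (2 * lam)))}"

definition dom_prox_subdiff :: "real \<Rightarrow> ('a::euclidean_space \<Rightarrow> ereal) \<Rightarrow> 'a set" where
  "dom_prox_subdiff lam f = {x. prox_subdiff lam f x \<noteq> {}}"

definition prox_hull :: "real \<Rightarrow> ('a::euclidean_space \<Rightarrow> ereal) \<Rightarrow> 'a \<Rightarrow> ereal" where
  "prox_hull lam f = (\<lambda>x. - moreau_env lam (\<lambda>y. - moreau_env lam f y) x)"

definition ext_convex :: "('a::euclidean_space \<Rightarrow> ereal) \<Rightarrow> bool" where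
  "ext_convex g \<longleftrightarrow> convex {(x, t::real). g x \<le> ereal t}"

definition fhat :: "real \<Rightarrow> ('a::euclidean_space \<Rightarrow> ereal) \<Rightarrow> 'a \<Rightarrow> 'a \<Rightarrow> ereal" where
  "fhat lam f x0 x = f x0 + ereal (jq x0 / lam)
     + (SUP p \<in> {(k::nat, xs::nat \<Rightarrow> 'a, vs::nat \<Rightarrow> 'a).
                 xs 0 = x0 \<and> (\<forall>i\<in>{1..k}. xs i \<in> dom_prox_subdiff lam f) \<and>
                 (\<forall>i\<le>k. vs i \<in> prox_subdiff lam f (xs i))}.
          (case p of (k, xs, vs) \<Rightarrow>
             ereal ((\<Sum>i<k. inner (vs i + (1/lam) *\<^sub>R xs i) (xs (Suc i) - xs i))
                    + inner (vs k + (1/lam) *\<^sub>R xs k) (x - xs k))))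
     - ereal (jq x / lam)"

end

theory Submission
  imports Defs
begin

text \<open>Write \<open>G = f + j/\<lambda>\<close>. A vector \<open>v\<close> is a \<open>\<lambda>\<close>-proximal subgradient of \<open>f\<close> at \<open>z\<close>
  exactly when \<open>v + z/\<lambda>\<close> is a global subgradient of \<open>G\<close> at \<open>z\<close>. Below the prox-threshold
  \<open>G\<close> grows quadratically, so every tilt \<open>G - \<langle>u, \<cdot>\<rangle>\<close> attains its minimum: every \<open>u\<close> is a
  subgradient of \<open>G\<close> somewhere. The chain sums in the definition of \<open>fhat\<close> telescope below
  the supremum of the affine minorants of \<open>G\<close> that touch \<open>G\<close> on its subdifferential graph,
  and chains whose subgradients interpolate linearly between two given ones approach that
  supremum. The same surjectivity makes this supremum, minus \<open>j/\<lambda>\<close>, equal to \<open>h\<^sub>\<lambda> f\<close>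
  and gives it the Moreau envelope of \<open>f\<close>. If \<open>G\<close> is convex, proximal point steps produce
  touching minorants that come arbitrarily close to \<open>G\<close>.\<close>

section \<open>Lower semicontinuity and minimizers\<close>

lemma lsc_funD:
  assumes "lsc_fun G" "c < G x"
  shows "eventually (\<lambda>y. c < G y) (nhds x)"
proof -
  have "eventually (\<lambda>y. c < G y) (at x)"
    using assms le_Liminf_iff unfolding lsc_fun_def by blast
  then show ?thesis
    using assms(2) by (simp add: eventually_at_filter) (elim eventually_mono, auto)
qed

lemma lsc_fun_add_continuous:
  fixes G :: "'a::euclidean_space \<Rightarrow> ereal"
  assumes "lsc_fun G" "continuous_on UNIV g"
  shows "lsc_fun (\<lambda>x. G x + ereal (g x))"
  unfolding lsc_fun_def le_Liminf_iff
proof (intro allI impI)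
  fix x and c :: ereal
  assume "c < G x + ereal (g x)"
  then have "c - ereal (g x) < G x"
    by (cases c; cases "G x") auto
  then obtain d where d: "c - ereal (g x) < ereal d" "ereal d < G x"
    using ereal_dense2 by blast
  have "eventually (\<lambda>y. ereal d < G y) (at x)"
    using lsc_funD[OF assms(1) d(2)] by (simp add: eventually_at_filter eventually_mono)
  moreover have "eventually (\<lambda>y. c < ereal (g y) + ereal d) (at x)"
  proof -
    have "(g \<longlongrightarrow> g x) (at x)"
      using assms(2) by (simp add: continuous_on_def)
    then have "((\<lambda>y. ereal (g y) + ereal d) \<longlongrightarrow> ereal (g x) + ereal d) (at x)"
      by (intro tendsto_intros) simp_all
    moreover have "c < ereal (g x) + ereal d"
      using d(1) by (cases c) auto
    ultimately show ?thesis
      by (rule order_tendstoD)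
  qed
  ultimately show "eventually (\<lambda>y. c < G y + ereal (g y)) (at x)"
  proof (rule eventually_elim2)
    fix y assume "ereal d < G y" "c < ereal (g y) + ereal d"
    then show "c < G y + ereal (g y)"
      by (cases c; cases "G y") auto
  qed
qed

lemma closed_sublevel_lsc:
  assumes "lsc_fun G"
  shows "closed {x. G x \<le> c}"
proof -
  have "open {x. c < G x}"
    unfolding open_contains_ball
  proof (intro ballI)
    fix x assume "x \<in> {x. c < G x}"
    then have "eventually (\<lambda>y. c < G y) (nhds x)"
      using lsc_funD[OF assms] by simp
    then show "\<exists>e>0. ball x e \<subseteq> {x. c < G x}"
      unfolding eventually_nhds_metric by (auto simp: dist_commute)
  qed
  then show ?thesis
    by (simp add: closed_def Compl_eq not_le)
qed

definition quadratic_growth :: "('a::real_normed_vector \<Rightarrow> ereal) \<Rightarrow> bool" where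
  "quadratic_growth G \<longleftrightarrow> (\<exists>a>0. \<exists>b. \<forall>z. ereal (a * (norm z)\<^sup>2 - b) \<le> G z)"

lemma quadratic_growth_not_MInfty:
  "quadratic_growth G \<Longrightarrow> G z \<noteq> -\<infinity>"
  unfolding quadratic_growth_def by (metis MInfty_neq_ereal(1) ereal_infty_less_eq(2))

lemma quadratic_growth_mono:
  "quadratic_growth G \<Longrightarrow> (\<And>z. G z \<le> H z) \<Longrightarrow> quadratic_growth H"
  unfolding quadratic_growth_def by (meson order_trans)

lemma quadratic_growth_add_linear:
  fixes G :: "'a::real_inner \<Rightarrow> ereal"
  assumes "quadratic_growth G"
  shows "quadratic_growth (\<lambda>z. G z + ereal (inner w z))"
proof -
  obtain a b where a: "0 < a" and bound: "\<And>z. ereal (a * (norm z)\<^sup>2 - b) \<le> G z"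
    using assms unfolding quadratic_growth_def by blast
  have "ereal (a/2 * (norm z)\<^sup>2 - (b + (norm w)\<^sup>2 / (2*a))) \<le> G z + ereal (inner w z)" for z
  proof -
    have "a * (norm z)\<^sup>2 - norm w * norm z - (a/2 * (norm z)\<^sup>2 - (norm w)\<^sup>2 / (2*a))
          = (a * norm z - norm w)\<^sup>2 / (2*a)"
      using a by (simp add: field_simps power2_eq_square)
    moreover have "0 \<le> (a * norm z - norm w)\<^sup>2 / (2*a)"
      using a by simp
    moreover have "- (norm w * norm z) \<le> inner w z"
      using norm_cauchy_schwarz[of "-w" z] by simp
    ultimately have "a/2 * (norm z)\<^sup>2 - (b + (norm w)\<^sup>2 / (2*a)) \<le> a * (norm z)\<^sup>2 - b + inner w z"
      by linarith
    then show ?thesis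
      using bound[of z] by (cases "G z") auto
  qed
  then show ?thesis
    unfolding quadratic_growth_def using a by (intro exI[of _ "a/2"]) auto
qed

lemma compact_sublevel_quadratic_growth:
  fixes G :: "'a::euclidean_space \<Rightarrow> ereal"
  assumes lsc: "lsc_fun G" and growth: "quadratic_growth G"
  shows "compact {x. G x \<le> ereal P}"
  unfolding compact_eq_bounded_closed
proof
  show "closed {x. G x \<le> ereal P}"
    by (rule closed_sublevel_lsc[OF lsc])
  obtain a b where a: "0 < a" and bound: "\<And>z. ereal (a * (norm z)\<^sup>2 - b) \<le> G z"
    using growth unfolding quadratic_growth_def by blast
  have "norm x \<le> max 1 ((P + b) / a)" if "G x \<le> ereal P" for x
  proof (cases "norm x \<le> 1")
    case False
    have "a * (norm x)\<^sup>2 - b \<le> P"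
      using order_trans[OF bound[of x] that] by simp
    moreover have "a * norm x \<le> a * (norm x)\<^sup>2"
      using False a by (simp add: power2_eq_square mult_le_cancel_left1)
    ultimately have "a * norm x \<le> P + b"
      by linarith
    then have "norm x \<le> (P + b) / a"
      using a by (simp add: pos_le_divide_eq mult.commute)
    then show ?thesis by simp
  qed simp
  then show "bounded {x. G x \<le> ereal P}"
    unfolding bounded_iff by blast
qed

lemma lsc_quadratic_growth_attains_min:
  fixes G :: "'a::euclidean_space \<Rightarrow> ereal"
  assumes lsc: "lsc_fun G" and growth: "quadratic_growth G" and p: "G p \<noteq> \<infinity>"
  shows "\<exists>z. G z \<noteq> \<infinity> \<and> (\<forall>y. G z \<le> G y)"
proof -
  define I where "I = (INF y. G y)"
  have I_le: "I \<le> G y" for y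
    unfolding I_def by (rule INF_lower) simp
  have "\<exists>z. G z \<le> I"
  proof (cases "G p = I")
    case True then show ?thesis by auto
  next
    case False
    with I_le[of p] have I_p: "I < G p" by simp
    obtain P where P: "G p = ereal P"
      using p quadratic_growth_not_MInfty[OF growth] by (cases "G p") auto
    have "compact {x. G x \<le> G p}"
      unfolding P by (rule compact_sublevel_quadratic_growth[OF lsc growth])
    then have "{x. G x \<le> G p} \<inter> (\<Inter>c\<in>{I<..}. {x. G x \<le> c}) \<noteq> {}"
    proof (rule compact_imp_fip_image)
      show "closed {x. G x \<le> c}" for c by (rule closed_sublevel_lsc[OF lsc])
      fix C assume C: "finite C" "C \<subseteq> {I<..}"
      then have "I < Min (insert (G p) C)"
        using I_p by (auto simp: Min_gr_iff)
      then obtain x where "G x < Min (insert (G p) C)"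
        unfolding I_def by (auto simp: INF_less_iff)
      with C have "x \<in> {x. G x \<le> G p} \<inter> (\<Inter>c\<in>C. {x. G x \<le> c})"
        by (auto simp: Min_gr_iff less_imp_le)
      then show "{x. G x \<le> G p} \<inter> (\<Inter>c\<in>C. {x. G x \<le> c}) \<noteq> {}"
        by blast
    qed
    then obtain z where "\<And>c. I < c \<Longrightarrow> G z \<le> c" by blast
    then show ?thesis by (blast intro: dense_ge)
  qed
  then obtain z where z: "G z \<le> I" by blast
  then have min: "\<forall>y. G z \<le> G y"
    using I_le order_trans by blast
  moreover have "G z \<noteq> \<infinity>"
    using min p by (metis ereal_infty_less_eq(1))
  ultimately show ?thesis by blast
qed

section \<open>Subgradients and the supported hull\<close>

definition subdiff_graph :: "('a::real_inner \<Rightarrow> ereal) \<Rightarrow> ('a \<times> 'a) set" where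
  "subdiff_graph G = {(z, u). G z \<noteq> \<infinity> \<and> (\<forall>y. G z + ereal (inner u (y - z)) \<le> G y)}"

definition supported_hull :: "('a::real_inner \<Rightarrow> ereal) \<Rightarrow> 'a \<Rightarrow> ereal" where
  "supported_hull G x = (SUP (z, u) \<in> subdiff_graph G. G z + ereal (inner u (x - z)))"

lemma subdiff_graphD:
  "(z, u) \<in> subdiff_graph G \<Longrightarrow> G z + ereal (inner u (y - z)) \<le> G y"
  unfolding subdiff_graph_def by blast

lemma subdiff_graph_finite:
  assumes "(z, u) \<in> subdiff_graph G" "G z \<noteq> -\<infinity>"
  shows "G z = ereal (real_of_ereal (G z))"
  using assms by (cases "G z") (auto simp: subdiff_graph_def)

lemma subdiff_graph_of_min:
  assumes "G z \<noteq> \<infinity>" "\<And>y. G z + ereal (- inner u z) \<le> G y + ereal (- inner u y)"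
  shows "(z, u) \<in> subdiff_graph G"
  unfolding subdiff_graph_def
proof (clarsimp simp: assms(1))
  fix y
  show "G z + ereal (inner u (y - z)) \<le> G y"
    using assms(2)[of y] by (cases "G z"; cases "G y") (auto simp: inner_diff_right)
qed

lemma supported_hull_upper:
  "(z, u) \<in> subdiff_graph G \<Longrightarrow> G z + ereal (inner u (x - z)) \<le> supported_hull G x"
  unfolding supported_hull_def by (rule SUP_upper2) auto

lemma supported_hull_le: "supported_hull G x \<le> G x"
  unfolding supported_hull_def by (rule SUP_least) (auto simp: subdiff_graph_def)

lemma subdiff_graph_supported_hull:
  assumes "(z, u) \<in> subdiff_graph G"
  shows "supported_hull G z = G z" "(z, u) \<in> subdiff_graph (supported_hull G)"
proof -
  show eq: "supported_hull G z = G z"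
    using supported_hull_upper[OF assms, of z] supported_hull_le[of G z] by simp
  show "(z, u) \<in> subdiff_graph (supported_hull G)"
    using assms supported_hull_upper[OF assms] by (auto simp: subdiff_graph_def eq)
qed

lemma subdiff_graph_surj:
  fixes G :: "'a::euclidean_space \<Rightarrow> ereal"
  assumes "lsc_fun G" "quadratic_growth G" "G p \<noteq> \<infinity>"
  shows "\<exists>z. (z, u) \<in> subdiff_graph G"
proof -
  define H where "H z = G z + ereal (inner (- u) z)" for z
  have "lsc_fun H"
    unfolding H_def by (intro lsc_fun_add_continuous assms(1) continuous_intros)
  moreover have "quadratic_growth H"
    unfolding H_def by (rule quadratic_growth_add_linear[OF assms(2)])
  moreover have "H p \<noteq> \<infinity>"
    using assms(3) by (simp add: H_def)
  ultimately obtain z where "H z \<noteq> \<infinity>" "\<And>y. H z \<le> H y"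
    using lsc_quadratic_growth_attains_min by blast
  then have "(z, u) \<in> subdiff_graph G"
    by (intro subdiff_graph_of_min) (auto simp: H_def)
  then show ?thesis ..
qed

section \<open>Subgradient chains\<close>

definition chain_sum :: "nat \<Rightarrow> (nat \<Rightarrow> 'a::real_inner) \<Rightarrow> (nat \<Rightarrow> 'a) \<Rightarrow> 'a \<Rightarrow> real" where
  "chain_sum k xs us x = (\<Sum>i<k. inner (us i) (xs (Suc i) - xs i)) + inner (us k) (x - xs k)"

definition subgradient_chains :: "('a::real_inner \<Rightarrow> ereal) \<Rightarrow> 'a \<Rightarrow> (nat \<times> (nat \<Rightarrow> 'a) \<times> (nat \<Rightarrow> 'a)) set" where
  "subgradient_chains G x0 = {(k, xs, us). xs 0 = x0 \<and> (\<forall>i\<le>k. (xs i, us i) \<in> subdiff_graph G)}"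

definition chain_sup :: "('a::real_inner \<Rightarrow> ereal) \<Rightarrow> 'a \<Rightarrow> 'a \<Rightarrow> ereal" where
  "chain_sup G x0 x = (SUP (k, xs, us) \<in> subgradient_chains G x0. ereal (chain_sum k xs us x))"

lemma subdiff_graph_telescope_le:
  assumes "\<forall>i<k. (xs i, us i) \<in> subdiff_graph G"
  shows "G (xs 0) + ereal (\<Sum>i<k. inner (us i) (xs (Suc i) - xs i)) \<le> G (xs k)"
  using assms
proof (induction k)
  case (Suc k)
  have "G (xs 0) + ereal (\<Sum>i<Suc k. inner (us i) (xs (Suc i) - xs i))
        = (G (xs 0) + ereal (\<Sum>i<k. inner (us i) (xs (Suc i) - xs i)))
          + ereal (inner (us k) (xs (Suc k) - xs k))"
    by (simp add: add.assoc)
  also have "\<dots> \<le> G (xs k) + ereal (inner (us k) (xs (Suc k) - xs k))"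
    using Suc by (intro add_right_mono) simp
  also have "\<dots> \<le> G (xs (Suc k))"
    using Suc.prems by (intro subdiff_graphD) simp
  finally show ?case .
qed simp

lemma chain_sum_le_supported_hull:
  assumes "(k, xs, us) \<in> subgradient_chains G x0"
  shows "G x0 + ereal (chain_sum k xs us x) \<le> supported_hull G x"
proof -
  have xs0: "xs 0 = x0" and graph: "\<And>i. i \<le> k \<Longrightarrow> (xs i, us i) \<in> subdiff_graph G"
    using assms by (auto simp: subgradient_chains_def)
  have "G x0 + ereal (chain_sum k xs us x)
        = (G (xs 0) + ereal (\<Sum>i<k. inner (us i) (xs (Suc i) - xs i))) + ereal (inner (us k) (x - xs k))"
    by (simp add: chain_sum_def xs0 add.assoc)
  also have "\<dots> \<le> G (xs k) + ereal (inner (us k) (x - xs k))"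
    using graph by (intro add_right_mono subdiff_graph_telescope_le) simp
  also have "\<dots> \<le> supported_hull G x"
    using graph by (intro supported_hull_upper) simp
  finally show ?thesis .
qed

text \<open>Joining \<open>(x0, u0)\<close> to \<open>(y, u)\<close> by \<open>m\<close> steps along the segment from \<open>u0\<close> to \<open>u\<close>
  in the dual variable, the telescoping error of each step is \<open>\<langle>(u - u0)/m, \<cdot>\<rangle>\<close>, which
  sums to \<open>\<langle>u - u0, y - x0\<rangle>/m\<close>.\<close>
lemma interpolating_chain:
  assumes surj: "\<And>u. \<exists>z. (z, u) \<in> subdiff_graph G" and fin: "\<And>x. G x \<noteq> -\<infinity>"
    and g0: "(x0, u0) \<in> subdiff_graph G" and gy: "(y, u) \<in> subdiff_graph G" and m: "1 \<le> m"
  shows "\<exists>zs us. (m, zs, us) \<in> subgradient_chains G x0 \<and> zs m = y \<and> us m = u \<and>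
     G y \<le> G x0 + ereal ((\<Sum>i<m. inner (us i) (zs (Suc i) - zs i)) + inner (u - u0) (y - x0) / real m)"
proof -
  define a where "a = (1 / real m) *\<^sub>R (u - u0)"
  define us where "us i = u0 + real i *\<^sub>R a" for i
  obtain Z where Z: "\<And>v. (Z v, v) \<in> subdiff_graph G"
    using surj by metis
  define zs where "zs i = (if i = 0 then x0 else if i = m then y else Z (us i))" for i
  have us_m: "us m = u"
    using m by (simp add: us_def a_def)
  have z0: "zs 0 = x0" and zm: "zs m = y"
    using m by (auto simp: zs_def)
  have graph: "(zs i, us i) \<in> subdiff_graph G" for i
    using g0 gy Z us_m by (simp add: zs_def us_def)
  define g where "g i = real_of_ereal (G (zs i))" for i
  have G_zs: "G (zs i) = ereal (g i)" for i
    unfolding g_def by (rule subdiff_graph_finite[OF graph fin])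
  have step: "g (Suc i) - g i \<le> inner (us i) (zs (Suc i) - zs i) + inner a (zs (Suc i) - zs i)" for i
  proof -
    have "G (zs (Suc i)) + ereal (inner (us (Suc i)) (zs i - zs (Suc i))) \<le> G (zs i)"
      by (rule subdiff_graphD[OF graph])
    moreover have "us (Suc i) = us i + a"
      by (simp add: us_def algebra_simps)
    ultimately show ?thesis
      by (simp add: G_zs inner_add_left inner_diff_right algebra_simps)
  qed
  have "g m - g 0 = (\<Sum>i<m. g (Suc i) - g i)"
    by (simp add: sum_lessThan_telescope)
  also have "\<dots> \<le> (\<Sum>i<m. inner (us i) (zs (Suc i) - zs i) + inner a (zs (Suc i) - zs i))"
    by (rule sum_mono) (rule step)
  also have "\<dots> = (\<Sum>i<m. inner (us i) (zs (Suc i) - zs i)) + inner a (zs m - zs 0)"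
    by (simp add: sum.distrib flip: inner_sum_right sum_lessThan_telescope)
  finally have "G y \<le> G x0 + ereal ((\<Sum>i<m. inner (us i) (zs (Suc i) - zs i)) + inner (u - u0) (y - x0) / real m)"
    using G_zs[of 0] G_zs[of m] by (simp add: z0 zm a_def)
  moreover have "(m, zs, us) \<in> subgradient_chains G x0"
    using z0 graph by (simp add: subgradient_chains_def)
  ultimately show ?thesis
    using zm us_m by blast
qed

lemma supported_hull_le_chain_sup:
  assumes surj: "\<And>u. \<exists>z. (z, u) \<in> subdiff_graph G" and fin: "\<And>x. G x \<noteq> -\<infinity>"
    and g0: "(x0, u0) \<in> subdiff_graph G"
  shows "supported_hull G x \<le> G x0 + chain_sup G x0 x"
  unfolding supported_hull_def
proof (rule SUP_least, clarify)
  fix y u assume gy: "(y, u) \<in> subdiff_graph G"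
  show "G y + ereal (inner u (x - y)) \<le> G x0 + chain_sup G x0 x"
  proof (rule ereal_le_epsilon2)
    fix e :: real assume e: "0 < e"
    define C where "C = inner (u - u0) (y - x0)"
    define m where "m = nat \<lceil>\<bar>C\<bar> / e\<rceil> + 1"
    have m: "1 \<le> m" "\<bar>C\<bar> / e < real m"
      unfolding m_def by linarith+
    then have err: "C / real m \<le> e"
      using e by (simp add: field_simps)
    obtain zs us where chain: "(m, zs, us) \<in> subgradient_chains G x0" and "zs m = y" "us m = u"
      and G_y: "G y \<le> G x0 + ereal ((\<Sum>i<m. inner (us i) (zs (Suc i) - zs i)) + C / real m)"
      using interpolating_chain[OF surj fin g0 gy m(1)] unfolding C_def by blast
    then have "G y + ereal (inner u (x - y)) \<le> G x0 + ereal (chain_sum m zs us x + C / real m)"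
      using G_y by (cases "G x0"; cases "G y") (simp_all add: chain_sum_def)
    also have "\<dots> \<le> G x0 + ereal (chain_sum m zs us x) + ereal e"
      using err by (cases "G x0") simp_all
    also have "\<dots> \<le> G x0 + chain_sup G x0 x + ereal e"
      unfolding chain_sup_def using chain
      by (intro add_right_mono add_left_mono) (rule SUP_upper2, auto)
    finally show "G y + ereal (inner u (x - y)) \<le> G x0 + chain_sup G x0 x + ereal e" .
  qed
qed

lemma supported_hull_eq_chain_sup:
  assumes surj: "\<And>u. \<exists>z. (z, u) \<in> subdiff_graph G" and fin: "\<And>x. G x \<noteq> -\<infinity>"
    and g0: "(x0, u0) \<in> subdiff_graph G"
  shows "supported_hull G x = G x0 + chain_sup G x0 x"
proof (rule antisym)
  show "supported_hull G x \<le> G x0 + chain_sup G x0 x"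
    by (rule supported_hull_le_chain_sup[OF surj fin g0])
  obtain r where r: "G x0 = ereal r"
    using subdiff_graph_finite[OF g0 fin] by blast
  have "chain_sup G x0 x \<le> supported_hull G x - ereal r"
    unfolding chain_sup_def
  proof (rule SUP_least, clarify)
    fix k xs us assume "(k, xs, us) \<in> subgradient_chains G x0"
    from chain_sum_le_supported_hull[OF this, of x]
    show "ereal (chain_sum k xs us x) \<le> supported_hull G x - ereal r"
      by (simp add: r ereal_le_minus add.commute)
  qed
  then show "G x0 + chain_sup G x0 x \<le> supported_hull G x"
    by (simp add: r ereal_le_minus add.commute)
qed

section \<open>The convex case\<close>

lemma ext_convexD:
  assumes "ext_convex G" "G x \<le> ereal a" "G y \<le> ereal b" "0 \<le> s" "s \<le> 1"
  shows "G ((1 - s) *\<^sub>R x + s *\<^sub>R y) \<le> ereal ((1 - s) * a + s * b)"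
proof -
  have "(1 - s) *\<^sub>R (x, a) + s *\<^sub>R (y, b) \<in> {(x, t). G x \<le> ereal t}"
    using assms by (intro convexD[of "{(x, t). G x \<le> ereal t}"]) (auto simp: ext_convex_def)
  then show ?thesis
    by simp
qed

lemma le_of_forall_le_add_mult:
  fixes a b d :: real
  assumes "\<And>s. 0 < s \<Longrightarrow> s \<le> 1 \<Longrightarrow> a \<le> b + s * d"
  shows "a \<le> b"
proof (rule field_le_epsilon)
  fix e :: real assume e: "0 < e"
  define s where "s = min 1 (e / (\<bar>d\<bar> + 1))"
  have s: "0 < s" "s \<le> 1"
    unfolding s_def using e by auto
  have "s * d \<le> s * \<bar>d\<bar>"
    using s by (simp add: mult_left_mono)
  also have "\<dots> \<le> e / (\<bar>d\<bar> + 1) * \<bar>d\<bar>"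
    unfolding s_def by (intro mult_right_mono) auto
  also have "\<dots> \<le> e"
    using e by (simp add: divide_simps)
  finally show "a \<le> b + e"
    using assms[OF s] by linarith
qed

text \<open>Optimality of \<open>z\<close> for \<open>G + \<bar>\<cdot> - x\<bar>\<^sup>2/(2t)\<close> along the segment from \<open>z\<close> to \<open>y\<close>
  gives \<open>s (G z + \<langle>(x - z)/t, y - z\<rangle>) \<le> s (G y + s \<bar>y - z\<bar>\<^sup>2/(2t))\<close> for \<open>0 < s \<le> 1\<close>;
  let \<open>s \<rightarrow> 0\<close>.\<close>
lemma ext_convex_prox_point_subdiff:
  fixes G :: "'a::euclidean_space \<Rightarrow> ereal"
  assumes cvx: "ext_convex G" and fin: "\<And>x. G x \<noteq> -\<infinity>" and Gz: "G z \<noteq> \<infinity>" and t: "0 < t"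
    and min: "\<And>y. G z + ereal ((norm (z - x))\<^sup>2 / (2*t)) \<le> G y + ereal ((norm (y - x))\<^sup>2 / (2*t))"
  shows "(z, (1/t) *\<^sub>R (x - z)) \<in> subdiff_graph G"
proof -
  have "G z + ereal (inner ((1/t) *\<^sub>R (x - z)) (y - z)) \<le> G y" for y
  proof (cases "G y")
    case (real gy)
    obtain gz where gz: "G z = ereal gz"
      using Gz fin[of z] by (cases "G z") auto
    define P where "P = inner (z - x) (y - z)"
    define D where "D = (norm (y - z))\<^sup>2 / (2*t)"
    have "gz - P / t \<le> gy + s * D" if s: "0 < s" "s \<le> 1" for s
    proof -
      define ys where "ys = (1 - s) *\<^sub>R z + s *\<^sub>R y"
      have G_ys: "G ys \<le> ereal ((1 - s) * gz + s * gy)"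
        unfolding ys_def using s by (intro ext_convexD[OF cvx]) (auto simp: gz real)
      have "(norm (ys - x))\<^sup>2 = (norm ((z - x) + s *\<^sub>R (y - z)))\<^sup>2"
        unfolding ys_def by (simp add: algebra_simps)
      also have "\<dots> = (norm (z - x))\<^sup>2 + 2 * s * P + s\<^sup>2 * (norm (y - z))\<^sup>2"
        unfolding P_def power2_norm_eq_inner by (simp add: inner_add_left inner_add_right inner_commute power2_eq_square)
      finally have "(norm (ys - x))\<^sup>2 / (2*t) = (norm (z - x))\<^sup>2 / (2*t) + s * P / t + s * (s * D)"
        unfolding D_def using t by (simp add: field_simps power2_eq_square)
      moreover have "ereal (gz + (norm (z - x))\<^sup>2 / (2*t)) \<le> G ys + ereal ((norm (ys - x))\<^sup>2 / (2*t))"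
        using min[of ys] by (simp add: gz)
      ultimately have "gz \<le> (1 - s) * gz + s * gy + s * P / t + s * (s * D)"
        using G_ys fin[of ys] by (cases "G ys") auto
      then have "s * (gz - P / t) \<le> s * (gy + s * D)"
        by (simp add: algebra_simps)
      then show ?thesis
        using s by simp
    qed
    then have "gz - P / t \<le> gy"
      by (rule le_of_forall_le_add_mult)
    moreover have "inner ((1/t) *\<^sub>R (x - z)) (y - z) = - P / t"
      unfolding P_def by (simp add: inner_minus_left[symmetric])
    ultimately show ?thesis
      by (simp add: gz real)
  qed (use fin in auto)
  with Gz show ?thesis
    by (simp add: subdiff_graph_def)
qed

lemma lsc_exceeds_with_penalty:
  fixes G :: "'a::euclidean_space \<Rightarrow> ereal"
  assumes lsc: "lsc_fun G" and below: "\<And>y. ereal B \<le> G y" and c: "ereal c < G x"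
  shows "\<exists>t>0. \<forall>y. ereal c < G y + ereal ((norm (y - x))\<^sup>2 / (2*t))"
proof -
  obtain \<delta> where \<delta>: "0 < \<delta>" and near: "\<And>y. dist y x < \<delta> \<Longrightarrow> ereal c < G y"
    using lsc_funD[OF lsc c] unfolding eventually_nhds_metric by blast
  define t where "t = \<delta>\<^sup>2 / (2 * (\<bar>c - B\<bar> + 1))"
  have t: "0 < t"
    unfolding t_def using \<delta> by (intro divide_pos_pos mult_pos_pos) auto
  have "ereal c < G y + ereal ((norm (y - x))\<^sup>2 / (2*t))" for y
  proof (cases "dist y x < \<delta>")
    case True
    have "ereal c < G y" by (rule near[OF True])
    also have "\<dots> \<le> G y + ereal ((norm (y - x))\<^sup>2 / (2*t))"
      using t by (intro ereal_le_add_self) simp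
    finally show ?thesis .
  next
    case False
    then have "\<delta>\<^sup>2 \<le> (norm (y - x))\<^sup>2"
      using \<delta> by (intro power_mono) (auto simp: dist_norm)
    then have "1 \<le> (norm (y - x))\<^sup>2 / \<delta>\<^sup>2"
      using \<delta> by simp
    moreover have "(norm (y - x))\<^sup>2 / (2*t) = (\<bar>c - B\<bar> + 1) * ((norm (y - x))\<^sup>2 / \<delta>\<^sup>2)"
      unfolding t_def using \<delta> by (simp add: field_simps)
    moreover have "(\<bar>c - B\<bar> + 1) * 1 \<le> (\<bar>c - B\<bar> + 1) * ((norm (y - x))\<^sup>2 / \<delta>\<^sup>2)"
      using calculation(1) by (rule mult_left_mono) simp
    ultimately have "\<bar>c - B\<bar> + 1 \<le> (norm (y - x))\<^sup>2 / (2*t)"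
      by (metis mult_1_right)
    then have "ereal c < ereal B + ereal ((norm (y - x))\<^sup>2 / (2*t))"
      by simp
    also have "\<dots> \<le> G y + ereal ((norm (y - x))\<^sup>2 / (2*t))"
      using below by (rule add_right_mono)
    finally show ?thesis .
  qed
  with t show ?thesis by blast
qed

lemma supported_hull_eq_of_convex:
  fixes G :: "'a::euclidean_space \<Rightarrow> ereal"
  assumes cvx: "ext_convex G" and lsc: "lsc_fun G" and growth: "quadratic_growth G" and p: "G p \<noteq> \<infinity>"
  shows "supported_hull G x = G x"
proof (rule antisym[OF supported_hull_le], rule ccontr)
  assume "\<not> G x \<le> supported_hull G x"
  then obtain c where c: "supported_hull G x < ereal c" "ereal c < G x"
    by (meson ereal_dense2 not_le)
  obtain a b where "0 < a" "\<And>y. ereal (a * (norm y)\<^sup>2 - b) \<le> G y"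
    using growth unfolding quadratic_growth_def by blast
  then have "ereal (- b) \<le> G y" for y
    using order_trans[of "ereal (- b)" "ereal (a * (norm y)\<^sup>2 - b)" "G y"] by simp
  then obtain t where t: "0 < t" and exceeds: "\<And>y. ereal c < G y + ereal ((norm (y - x))\<^sup>2 / (2*t))"
    using lsc_exceeds_with_penalty[OF lsc _ c(2)] by blast
  define H where "H y = G y + ereal ((norm (y - x))\<^sup>2 / (2*t))" for y
  have "lsc_fun H"
    unfolding H_def using t by (intro lsc_fun_add_continuous lsc continuous_intros) auto
  moreover have "quadratic_growth H"
    using growth by (rule quadratic_growth_mono) (use t in \<open>simp add: H_def ereal_le_add_self\<close>)
  moreover have "H p \<noteq> \<infinity>"
    using p by (simp add: H_def)
  ultimately obtain z where Hz: "H z \<noteq> \<infinity>" and z_min: "\<And>y. H z \<le> H y"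
    using lsc_quadratic_growth_attains_min by blast
  have "(z, (1/t) *\<^sub>R (x - z)) \<in> subdiff_graph G"
  proof (rule ext_convex_prox_point_subdiff[OF cvx _ _ t])
    show "G y \<noteq> -\<infinity>" for y
      by (rule quadratic_growth_not_MInfty[OF growth])
    show "G z \<noteq> \<infinity>"
      using Hz by (simp add: H_def)
    show "G z + ereal ((norm (z - x))\<^sup>2 / (2*t)) \<le> G y + ereal ((norm (y - x))\<^sup>2 / (2*t))" for y
      using z_min[of y] by (simp add: H_def)
  qed
  then have hull: "G z + ereal (inner ((1/t) *\<^sub>R (x - z)) (x - z)) \<le> supported_hull G x"
    by (rule supported_hull_upper)
  have "inner ((1/t) *\<^sub>R (x - z)) (x - z) = (norm (z - x))\<^sup>2 / t"
    by (simp add: dot_square_norm norm_minus_commute[of x z])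
  then have "(norm (z - x))\<^sup>2 / (2*t) \<le> inner ((1/t) *\<^sub>R (x - z)) (x - z)"
    using t by (simp add: frac_le)
  then have "H z \<le> G z + ereal (inner ((1/t) *\<^sub>R (x - z)) (x - z))"
    unfolding H_def by (intro add_left_mono) simp
  then have "ereal c < supported_hull G x"
    using exceeds[of z] hull unfolding H_def by order
  with c(1) show False
    by simp
qed

section \<open>Proximal subgradients, envelope and hull of \<open>f\<close>\<close>

lemma norm_diff_power2: "(norm (y - z))\<^sup>2 = (norm y)\<^sup>2 - 2 * inner y z + (norm (z::'a::real_inner))\<^sup>2"
  by (simp add: power2_norm_eq_inner inner_diff_left inner_diff_right inner_commute)

definition f_plus_jq :: "real \<Rightarrow> ('a::euclidean_space \<Rightarrow> ereal) \<Rightarrow> 'a \<Rightarrow> ereal" where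
  "f_plus_jq lam f x = f x + ereal (jq x / lam)"

lemma lsc_f_plus_jq: "lsc_fun f \<Longrightarrow> lsc_fun (f_plus_jq lam f)"
  unfolding f_plus_jq_def jq_def divide_inverse by (intro lsc_fun_add_continuous continuous_intros)

lemma quadratic_growth_below_threshold:
  fixes f :: "'a::euclidean_space \<Rightarrow> ereal"
  assumes lam: "0 < lam" "ereal lam < prox_threshold f"
  shows "quadratic_growth (f_plus_jq lam f)"
proof -
  obtain L y0 where L: "lam < L" and "moreau_env L f y0 > -\<infinity>"
    using lam(2) unfolding prox_threshold_def less_SUP_iff by auto
  then obtain m where "ereal m < moreau_env L f y0"
    using ereal_dense2 by blast
  then have m: "ereal m \<le> f z + ereal ((norm (z - y0))\<^sup>2 / (2*L))" for z
    unfolding moreau_env_def by (meson INF_lower UNIV_I less_imp_le order_trans)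
  define a where "a = 1 / (2*lam) - 1 / (2*L)"
  have a: "0 < a"
    unfolding a_def using lam L by (simp add: field_simps)
  have "ereal (a * (norm z)\<^sup>2 - ((norm y0)\<^sup>2 / (2*L) - m))
        \<le> f_plus_jq lam f z + ereal (inner (- (1/L) *\<^sub>R y0) z)" for z
  proof -
    have "a * (norm z)\<^sup>2 - ((norm y0)\<^sup>2 / (2*L) - m) + (norm (z - y0))\<^sup>2 / (2*L)
          = m + jq z / lam + inner (- (1/L) *\<^sub>R y0) z"
      unfolding a_def jq_def norm_diff_power2 using lam L
      by (simp add: field_simps inner_commute)
    then show ?thesis
      using m[of z] unfolding f_plus_jq_def by (cases "f z") auto
  qed
  then have "quadratic_growth (\<lambda>z. f_plus_jq lam f z + ereal (inner (- (1/L) *\<^sub>R y0) z))"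
    unfolding quadratic_growth_def using a by blast
  from quadratic_growth_add_linear[OF this, of "(1/L) *\<^sub>R y0"]
  show ?thesis
    by (simp add: add.assoc)
qed

lemma prox_subdiff_iff_subdiff_graph:
  fixes f :: "'a::euclidean_space \<Rightarrow> ereal"
  assumes lam: "0 < lam"
  shows "v \<in> prox_subdiff lam f z \<longleftrightarrow> (z, v + (1/lam) *\<^sub>R z) \<in> subdiff_graph (f_plus_jq lam f)"
proof -
  have "f z + ereal (inner v (y - z) - (norm (y - z))\<^sup>2 / (2 * lam)) \<le> f y \<longleftrightarrow>
        f_plus_jq lam f z + ereal (inner (v + (1/lam) *\<^sub>R z) (y - z)) \<le> f_plus_jq lam f y" for y
  proof -
    have "jq z / lam + inner (v + (1/lam) *\<^sub>R z) (y - z)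
          = (inner v (y - z) - (norm (y - z))\<^sup>2 / (2 * lam)) + jq y / lam"
      unfolding jq_def norm_diff_power2 using lam
      by (simp add: inner_diff_left inner_diff_right inner_add_left inner_add_right dot_square_norm
          inner_commute field_simps)
    then have "f_plus_jq lam f z + ereal (inner (v + (1/lam) *\<^sub>R z) (y - z))
          = f z + ereal (inner v (y - z) - (norm (y - z))\<^sup>2 / (2 * lam)) + ereal (jq y / lam)"
      unfolding f_plus_jq_def by (simp add: add.assoc)
    then show ?thesis
      unfolding f_plus_jq_def by (simp add: ereal_add_le_add_iff2)
  qed
  moreover have "f_plus_jq lam f z \<noteq> \<infinity> \<longleftrightarrow> f z \<noteq> \<infinity>"
    by (simp add: f_plus_jq_def)
  ultimately show ?thesis
    unfolding prox_subdiff_def subdiff_graph_def by auto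
qed

lemma fhat_eq_chain_sup:
  fixes f :: "'a::euclidean_space \<Rightarrow> ereal"
  assumes lam: "0 < lam"
  shows "fhat lam f x0 x
         = f_plus_jq lam f x0 + chain_sup (f_plus_jq lam f) x0 x - ereal (jq x / lam)"
proof -
  define S where "S = {(k::nat, xs::nat \<Rightarrow> 'a, vs::nat \<Rightarrow> 'a).
    xs 0 = x0 \<and> (\<forall>i\<in>{1..k}. xs i \<in> dom_prox_subdiff lam f) \<and>
    (\<forall>i\<le>k. vs i \<in> prox_subdiff lam f (xs i))}"
  define to_subgrad where "to_subgrad =
    (\<lambda>(k::nat, xs::nat \<Rightarrow> 'a, us::nat \<Rightarrow> 'a). (k, xs, \<lambda>i. us i - (1/lam) *\<^sub>R xs i))"
  have S_eq: "S = to_subgrad ` subgradient_chains (f_plus_jq lam f) x0"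
  proof (intro set_eqI iffI)
    fix p assume "p \<in> S"
    then obtain k xs vs where p: "p = (k, xs, vs)" and "xs 0 = x0"
      and "\<forall>i\<le>k. vs i \<in> prox_subdiff lam f (xs i)"
      unfolding S_def by auto
    then have "(k, xs, \<lambda>i. vs i + (1/lam) *\<^sub>R xs i) \<in> subgradient_chains (f_plus_jq lam f) x0"
      by (simp add: subgradient_chains_def prox_subdiff_iff_subdiff_graph[OF lam, symmetric])
    moreover have "p = to_subgrad (k, xs, \<lambda>i. vs i + (1/lam) *\<^sub>R xs i)"
      by (simp add: p to_subgrad_def)
    ultimately show "p \<in> to_subgrad ` subgradient_chains (f_plus_jq lam f) x0"
      by blast
  next
    fix p assume "p \<in> to_subgrad ` subgradient_chains (f_plus_jq lam f) x0"
    then obtain k xs us where p: "p = to_subgrad (k, xs, us)"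
      and chain: "(k, xs, us) \<in> subgradient_chains (f_plus_jq lam f) x0"
      by auto
    then have "\<forall>i\<le>k. us i - (1/lam) *\<^sub>R xs i \<in> prox_subdiff lam f (xs i)"
      by (simp add: subgradient_chains_def prox_subdiff_iff_subdiff_graph[OF lam])
    with chain show "p \<in> S"
      unfolding p by (auto simp: S_def to_subgrad_def subgradient_chains_def dom_prox_subdiff_def)
  qed
  have "(SUP p\<in>S. case p of (k, xs, vs) \<Rightarrow> ereal ((\<Sum>i<k. inner (vs i + (1/lam) *\<^sub>R xs i) (xs (Suc i) - xs i))
          + inner (vs k + (1/lam) *\<^sub>R xs k) (x - xs k)))
        = chain_sup (f_plus_jq lam f) x0 x"
    unfolding S_eq chain_sup_def image_image
    by (rule SUP_cong) (auto simp: to_subgrad_def chain_sum_def)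
  then show ?thesis
    unfolding fhat_def f_plus_jq_def S_def by simp
qed

lemma moreau_env_at_subdiff:
  fixes f :: "'a::euclidean_space \<Rightarrow> ereal"
  assumes lam: "0 < lam" and graph: "(z, (1/lam) *\<^sub>R y) \<in> subdiff_graph (f_plus_jq lam f)"
  shows "moreau_env lam f y = f_plus_jq lam f z + ereal (jq y / lam - inner ((1/lam) *\<^sub>R y) z)"
proof -
  define G where "G = f_plus_jq lam f"
  define u where "u = (1/lam) *\<^sub>R y"
  have pointwise: "f w + ereal ((norm (w - y))\<^sup>2 / (2 * lam)) = G w + ereal (jq y / lam - inner u w)" for w
  proof -
    have "(norm (w - y))\<^sup>2 / (2 * lam) = jq w / lam + (jq y / lam - inner u w)"
      unfolding jq_def norm_diff_power2 u_def using lam by (simp add: inner_commute field_simps)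
    then show ?thesis
      unfolding G_def f_plus_jq_def by (simp add: add.assoc)
  qed
  have "G z + ereal (jq y / lam - inner u z) \<le> G w + ereal (jq y / lam - inner u w)" for w
  proof -
    have "G z + ereal (inner u (w - z)) \<le> G w"
      using graph unfolding G_def u_def by (rule subdiff_graphD)
    then show ?thesis
      by (cases "G z"; cases "G w") (simp_all add: inner_diff_right)
  qed
  then have "(INF w. G w + ereal (jq y / lam - inner u w)) = G z + ereal (jq y / lam - inner u z)"
    by (intro antisym INF_lower2[of z] INF_greatest) auto
  then show ?thesis
    unfolding moreau_env_def pointwise G_def u_def .
qed

lemma prox_hull_eq_supported_hull:
  fixes f :: "'a::euclidean_space \<Rightarrow> ereal"
  assumes lam: "0 < lam" and surj: "\<And>u. \<exists>z. (z, u) \<in> subdiff_graph (f_plus_jq lam f)"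
    and fin: "\<And>x. f_plus_jq lam f x \<noteq> -\<infinity>"
  shows "prox_hull lam f x = supported_hull (f_plus_jq lam f) x - ereal (jq x / lam)"
proof -
  define G where "G = f_plus_jq lam f"
  define T where "T y = - (- moreau_env lam f y + ereal ((norm (y - x))\<^sup>2 / (2 * lam)))" for y
  have T: "T y = G z + ereal (inner u (x - z)) - ereal (jq x / lam)"
    if graph: "(z, u) \<in> subdiff_graph G" and y: "y = lam *\<^sub>R u" for y z u
  proof -
    obtain r where r: "G z = ereal r"
      using subdiff_graph_finite[OF graph fin[folded G_def]] by blast
    have "(z, (1/lam) *\<^sub>R y) \<in> subdiff_graph (f_plus_jq lam f)"
      using graph lam by (simp add: y G_def)
    from moreau_env_at_subdiff[OF lam this]
    have "moreau_env lam f y = ereal (r + (jq y / lam - inner u z))"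
      using lam by (simp add: G_def[symmetric] r y)
    moreover have "jq y / lam - inner u z - (norm (y - x))\<^sup>2 / (2 * lam) = inner u (x - z) - jq x / lam"
      unfolding jq_def norm_diff_power2 y using lam
      by (simp add: inner_diff_right inner_commute power_mult_distrib field_simps)
    ultimately show ?thesis
      by (simp add: T_def r)
  qed
  have "prox_hull lam f x = (SUP y. T y)"
    unfolding prox_hull_def moreau_env_def[of lam "\<lambda>y. - moreau_env lam f y"] T_def
    by (simp add: ereal_SUP_uminus_eq)
  also have "\<dots> = (SUP (z, u)\<in>subdiff_graph G. G z + ereal (inner u (x - z)) - ereal (jq x / lam))"
  proof (rule SUP_eq)
    fix y
    obtain z where "(z, (1/lam) *\<^sub>R y) \<in> subdiff_graph G"
      using surj unfolding G_def by blast
    with T[OF this] lam show "\<exists>p\<in>subdiff_graph G. T y \<le> (case p of (z, u) \<Rightarrow> G z + ereal (inner u (x - z)) - ereal (jq x / lam))"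
      by (intro bexI) auto
  next
    fix p assume p: "p \<in> subdiff_graph G"
    obtain z u where zu: "p = (z, u)"
      by fastforce
    have "T (lam *\<^sub>R u) = G z + ereal (inner u (x - z)) - ereal (jq x / lam)"
      using T p zu by blast
    then show "\<exists>y\<in>UNIV. (case p of (z, u) \<Rightarrow> G z + ereal (inner u (x - z)) - ereal (jq x / lam)) \<le> T y"
      unfolding zu by (intro bexI[of _ "lam *\<^sub>R u"]) simp_all
  qed
  also have "\<dots> = supported_hull G x - ereal (jq x / lam)"
    unfolding supported_hull_def split_def
    by (rule SUP_ereal_minus_left) (use surj in \<open>auto simp: G_def\<close>)
  finally show ?thesis
    unfolding G_def .
qed

lemma f_plus_jq_minus_jq: "f_plus_jq lam (\<lambda>x. H x - ereal (jq x / lam)) = H"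
proof
  show "f_plus_jq lam (\<lambda>x. H x - ereal (jq x / lam)) x = H x" for x
    by (cases "H x") (simp_all add: f_plus_jq_def)
qed

lemma moreau_env_supported_hull_minus_jq:
  fixes f :: "'a::euclidean_space \<Rightarrow> ereal"
  assumes lam: "0 < lam" and surj: "\<And>u. \<exists>z. (z, u) \<in> subdiff_graph (f_plus_jq lam f)"
  shows "moreau_env lam (\<lambda>x. supported_hull (f_plus_jq lam f) x - ereal (jq x / lam)) = moreau_env lam f"
    (is "moreau_env lam ?g = _")
proof
  fix y
  obtain z where graph: "(z, (1/lam) *\<^sub>R y) \<in> subdiff_graph (f_plus_jq lam f)"
    using surj by blast
  have "(z, (1/lam) *\<^sub>R y) \<in> subdiff_graph (f_plus_jq lam ?g)"
    unfolding f_plus_jq_minus_jq by (rule subdiff_graph_supported_hull(2)[OF graph])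
  then have "moreau_env lam ?g y = f_plus_jq lam ?g z + ereal (jq y / lam - inner ((1/lam) *\<^sub>R y) z)"
    by (rule moreau_env_at_subdiff[OF lam])
  also have "\<dots> = f_plus_jq lam f z + ereal (jq y / lam - inner ((1/lam) *\<^sub>R y) z)"
    unfolding f_plus_jq_minus_jq subdiff_graph_supported_hull(1)[OF graph] ..
  also have "\<dots> = moreau_env lam f y"
    by (rule moreau_env_at_subdiff[OF lam graph, symmetric])
  finally show "moreau_env lam ?g y = moreau_env lam f y" .
qed

lemma fhat_eq_supported_hull:
  fixes f :: "'a::euclidean_space \<Rightarrow> ereal"
  assumes lam: "0 < lam" and surj: "\<And>u. \<exists>z. (z, u) \<in> subdiff_graph (f_plus_jq lam f)"
    and fin: "\<And>x. f_plus_jq lam f x \<noteq> -\<infinity>" and x0: "x0 \<in> dom_prox_subdiff lam f"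
  shows "fhat lam f x0 = (\<lambda>x. supported_hull (f_plus_jq lam f) x - ereal (jq x / lam))"
proof
  fix x
  obtain v0 where "v0 \<in> prox_subdiff lam f x0"
    using x0 unfolding dom_prox_subdiff_def by blast
  then have "(x0, v0 + (1/lam) *\<^sub>R x0) \<in> subdiff_graph (f_plus_jq lam f)"
    by (simp add: prox_subdiff_iff_subdiff_graph[OF lam])
  from supported_hull_eq_chain_sup[OF surj fin this]
  show "fhat lam f x0 x = supported_hull (f_plus_jq lam f) x - ereal (jq x / lam)"
    by (simp add: fhat_eq_chain_sup[OF lam])
qed

theorem mainTheorem12:
  fixes f :: "'a::euclidean_space \<Rightarrow> ereal" and lam :: real and x0 :: 'a
  assumes "proper_fun f" and "lsc_fun f" and "prox_bounded f"
    and "prox_threshold f > 0"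
    and "0 < lam" and "ereal lam < prox_threshold f"
    and "x0 \<in> dom_prox_subdiff lam f"
  shows "(fhat lam f x0 = prox_hull lam f \<and> moreau_env lam (fhat lam f x0) = moreau_env lam f)
         \<and> (ext_convex (\<lambda>x. f x + ereal (jq x / lam)) \<longrightarrow> fhat lam f x0 = f)"
proof -
  have lsc: "lsc_fun (f_plus_jq lam f)"
    using \<open>lsc_fun f\<close> by (rule lsc_f_plus_jq)
  have growth: "quadratic_growth (f_plus_jq lam f)"
    using \<open>0 < lam\<close> \<open>ereal lam < prox_threshold f\<close> by (rule quadratic_growth_below_threshold)
  obtain p where p: "f_plus_jq lam f p \<noteq> \<infinity>"
    using \<open>proper_fun f\<close> by (auto simp: proper_fun_def f_plus_jq_def)
  have surj: "\<And>u. \<exists>z. (z, u) \<in> subdiff_graph (f_plus_jq lam f)"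
    using lsc growth p by (rule subdiff_graph_surj)
  have fin: "\<And>x. f_plus_jq lam f x \<noteq> -\<infinity>"
    using growth by (rule quadratic_growth_not_MInfty)
  have fhat: "fhat lam f x0 = (\<lambda>x. supported_hull (f_plus_jq lam f) x - ereal (jq x / lam))"
    using \<open>0 < lam\<close> surj fin \<open>x0 \<in> dom_prox_subdiff lam f\<close> by (rule fhat_eq_supported_hull)
  have "fhat lam f x0 = prox_hull lam f"
    unfolding fhat prox_hull_eq_supported_hull[OF \<open>0 < lam\<close> surj fin] ..
  moreover have "moreau_env lam (fhat lam f x0) = moreau_env lam f"
    unfolding fhat using \<open>0 < lam\<close> surj by (rule moreau_env_supported_hull_minus_jq)
  moreover have "fhat lam f x0 = f" if "ext_convex (\<lambda>x. f x + ereal (jq x / lam))"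
  proof -
    have "supported_hull (f_plus_jq lam f) = f_plus_jq lam f"
      using that lsc growth p unfolding f_plus_jq_def[abs_def]
      by (intro ext supported_hull_eq_of_convex)
    then have "fhat lam f x0 x = f x" for x
      by (cases "f x") (simp_all add: fhat f_plus_jq_def)
    then show ?thesis ..
  qed
  ultimately show ?thesis
    by blast
qed

end
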